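(* Under the standing assumptions of the setup, for every $(v,w)$ with $\nu(v,w)>0$, \[ \gamma_\ell(v,w)\le \mathbb{E}(Y^1-Y^0\mid V=v,W=w,E=1)\le \gamma_u(v,w), \] where \[ \gamma_\ell(v,w)=\max\left\{\frac{\mu_1(v)-\mu_0(v)-(b-a)(1-\nu(v,w))}{\nu(v,w)},\,a-b\right\},\qquad \gamma_u(v,w)=\min\left\{\frac{\mu_1(v)-\mu_0(v)-(a-b)(1-\nu(v,w))}{\nu(v,w)},\,b-a\right\}. \]
   Context: Setup: there are random variables $V$ (covariates, discrete or continuous), $W$ (covariates taking finitely many values), a population indicator $E\in\{0,1\}$ ($E=1$: study population, $E=0$: target population), a treatment $A\in\{0,1\}$, potential outcomes $Y^1,Y^0\in[a,b]$ almost surely for known constants $a<b$, and observed outcome $Y=Y^A$ (consistency). In the study population ($E=1$) treatment is unconfounded given $V$: $A\perp\!\!\!\perp (Y^0,Y^1)\mid V,E=1$. Positivity: $\mathbb{P}(A=a'\mid V=v,W=w)>0$ for $a'\in\{0,1\}$ and all $(v,w)$. Transport assumptions: (1) $\mathbb{P}(W=w\mid V=v,E=1)=\mathbb{P}(W=w\mid V=v,E=0)$ for all $v,w$; (2) $\mathbb{E}(Y^1-Y^0\mid V,W,E=1)=\mathbb{E}(Y^1-Y^0\mid V,W,E=0)$. Notation: $\mu_{a'}(v)=\mathbb{E}(Y\mid V=v,A=a',E=1)$ for $a'\in\{0,1\}$, and $\nu(v,w)=\mathbb{P}(W=w\mid V=v,E=0)$. *)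

theory Defs
  imports "HOL-Probability.Probability"
begin

text \<open>A version of the conditional expectation E(f | G, S) of f given the random
  element G (with values in the measurable space N) within the subpopulation
  (event) S, represented (Doob--Dynkin) as a measurable function g on the value
  space of G: for every measurable set B of values,
  E(f 1_S 1_{G in B}) = E(g(G) 1_S 1_{G in B}).  Division by P(S) cancels.\<close>
definition cond_exp_version ::
  "'a measure \<Rightarrow> 'g measure \<Rightarrow> ('a \<Rightarrow> 'g) \<Rightarrow> 'a set \<Rightarrow> ('a \<Rightarrow> real) \<Rightarrow> ('g \<Rightarrow> real) \<Rightarrow> bool"
where
  "cond_exp_version M N G S f g \<longleftrightarrow>
     g \<in> borel_measurable N \<and>
     integrable M (\<lambda>x. indicator S x * g (G x)) \<and>
     (\<forall>B\<in>sets N. (\<integral>x. indicator (S \<inter> G -` B) x * f x \<partial>M)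
                 = (\<integral>x. indicator (S \<inter> G -` B) x * g (G x) \<partial>M))"

definition cond_prob_version ::
  "'a measure \<Rightarrow> 'g measure \<Rightarrow> ('a \<Rightarrow> 'g) \<Rightarrow> 'a set \<Rightarrow> 'a set \<Rightarrow> ('g \<Rightarrow> real) \<Rightarrow> bool"
where
  "cond_prob_version M N G S C p \<longleftrightarrow> cond_exp_version M N G S (indicator C) p"

definition gamma_l :: "real \<Rightarrow> real \<Rightarrow> real \<Rightarrow> real \<Rightarrow> real \<Rightarrow> real" where
  "gamma_l a b m1 m0 n = max ((m1 - m0 - (b - a) * (1 - n)) / n) (a - b)"

definition gamma_u :: "real \<Rightarrow> real \<Rightarrow> real \<Rightarrow> real \<Rightarrow> real \<Rightarrow> real" where
  "gamma_u a b m1 m0 n = min ((m1 - m0 - (a - b) * (1 - n)) / n) (b - a)"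

end

theory Submission
  imports Defs
begin

text \<open>Write \<open>\<Delta>(v) = \<mu>\<^sub>1(v) - \<mu>\<^sub>0(v)\<close> and \<open>\<tau>(v,w) = E(Y\<^sup>1 - Y\<^sup>0 | V=v, W=w, E=1)\<close>.
  By unconfoundedness and positivity, \<open>\<mu>\<^sub>a\<close> is also a version of \<open>E(Y\<^sup>a | V, E=1)\<close>, so
  \<open>\<Delta>\<close> is a version of \<open>E(Y\<^sup>1 - Y\<^sup>0 | V, E=1)\<close>.  Transport assumption (1) makes
  \<open>\<nu>(v,\<cdot>)\<close> the conditional law of the finitely valued \<open>W\<close> in the study population, so the
  tower property gives \<open>\<Delta>(v) = \<Sum>\<^sub>w \<nu>(v,w) \<tau>(v,w)\<close>, where every \<open>\<tau>(v,w)\<close> with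
  \<open>\<nu>(v,w) > 0\<close> lies in \<open>[a-b, b-a]\<close>.  Isolating the summand of \<open>w\<close> and bounding the
  remaining mass \<open>1 - \<nu>(v,w)\<close> by these extremes yields the two bounds.\<close>

lemma emeasure_distr_density:
  fixes h :: "'a \<Rightarrow> ennreal"
  assumes [measurable]: "G \<in> measurable M N" "h \<in> borel_measurable M" "X \<in> sets N"
  shows "emeasure (distr (density M h) N G) X = (\<integral>\<^sup>+x. h x * indicator X (G x) \<partial>M)"
  by (simp add: emeasure_distr emeasure_density) (rule nn_integral_cong, auto simp: indicator_def)

lemma ennreal_mult_divide_cancel: "0 < q \<Longrightarrow> ennreal q * (y * (z / ennreal q)) = y * z"
proof -
  assume "0 < q"
  then have "ennreal q * (z / ennreal q) = z"
    using mult_divide_eq_ennreal[of "ennreal q" z] by (simp add: ennreal_times_divide mult.commute)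
  then show ?thesis by (metis mult.left_commute)
qed

lemma sum_ennreal_mult:
  assumes "finite F" "\<And>w. w \<in> F \<Longrightarrow> 0 \<le> a w" "\<And>w. w \<in> F \<Longrightarrow> 0 < a w \<Longrightarrow> 0 \<le> b w"
  shows "(\<Sum>w\<in>F. ennreal (a w) * ennreal (b w)) = ennreal (\<Sum>w\<in>F. a w * b w)"
proof -
  have "ennreal (a w) * ennreal (b w) = ennreal (a w * b w)" and "0 \<le> a w * b w" if "w \<in> F" for w
    using assms(2,3)[OF that] by (cases "a w = 0"; simp add: ennreal_mult)+
  then show ?thesis using assms(1) by (simp add: sum_ennreal)
qed

lemma ennreal_shifted_mixture_eq:
  fixes nu t :: "'w \<Rightarrow> real"
  assumes F: "finite F" and nonneg: "\<forall>w\<in>F. 0 \<le> nu w" and sum_1: "(\<Sum>w\<in>F. nu w) = 1"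
    and lower: "\<forall>w\<in>F. 0 < nu w \<longrightarrow> l \<le> t w" and y: "0 \<le> y - l"
    and eq: "ennreal (y - l) = (\<Sum>w\<in>F. ennreal (nu w) * ennreal (t w - l))"
  shows "y = (\<Sum>w\<in>F. nu w * t w)"
proof -
  have "ennreal (y - l) = ennreal (\<Sum>w\<in>F. nu w * (t w - l))"
    using nonneg lower by (simp add: eq sum_ennreal_mult[OF F])
  moreover have "0 \<le> (\<Sum>w\<in>F. nu w * (t w - l))"
    using nonneg lower by (intro sum_nonneg) (metis mult_nonneg_nonneg order_le_less mult_zero_left diff_ge_0_iff_ge)
  ultimately have "y - l = (\<Sum>w\<in>F. nu w * (t w - l))"
    using y by simp
  also have "\<dots> = (\<Sum>w\<in>F. nu w * t w) - l"
    using sum_1 by (simp add: right_diff_distrib sum_subtractf flip: sum_distrib_right)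
  finally show ?thesis by simp
qed

lemma cond_exp_version_cong:
  "(\<And>x. x \<in> S \<Longrightarrow> f x = f' x) \<Longrightarrow> cond_exp_version M N G S f g = cond_exp_version M N G S f' g"
  unfolding cond_exp_version_def
  by (intro conj_cong refl ball_cong arg_cong2[where f="(=)"] Bochner_Integration.integral_cong)
    (auto simp: indicator_def)

section \<open>Versions of conditional expectations\<close>

text \<open>The extended-nonnegative analogue of \<open>cond_exp_version\<close> needs no integrability;
  identities with general test functions, the tower property and uniqueness are proved in this
  form and transferred back to real versions.\<close>

definition nn_cond_exp_version ::
  "'a measure \<Rightarrow> 'g measure \<Rightarrow> ('a \<Rightarrow> 'g) \<Rightarrow> 'a set \<Rightarrow> ('a \<Rightarrow> ennreal) \<Rightarrow> ('g \<Rightarrow> ennreal) \<Rightarrow> bool"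
where
  "nn_cond_exp_version M N G S f g \<longleftrightarrow>
     g \<in> borel_measurable N \<and>
     (\<forall>B\<in>sets N. (\<integral>\<^sup>+x. indicator S x * f x * indicator B (G x) \<partial>M)
                 = (\<integral>\<^sup>+x. indicator S x * g (G x) * indicator B (G x) \<partial>M))"

locale conditioning = finite_measure M for M :: "'a measure" +
  fixes N :: "'g measure" and G :: "'a \<Rightarrow> 'g" and S :: "'a set"
  assumes G_measurable[measurable]: "G \<in> measurable M N"
    and S_sets[measurable]: "S \<in> sets M"
begin

lemma preimage_sets[measurable]: "B \<in> sets N \<Longrightarrow> S \<inter> G -` B \<in> sets M"
proof -
  assume [measurable]: "B \<in> sets N"
  have "S \<inter> G -` B = S \<inter> (G -` B \<inter> space M)" using sets.sets_into_space[OF S_sets] by auto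
  then show ?thesis by simp
qed

lemma integrable_indicator_preimage:
  fixes f :: "'a \<Rightarrow> real"
  assumes "integrable M (\<lambda>x. indicator S x * f x)" and "B \<in> sets N"
  shows "integrable M (\<lambda>x. indicator (S \<inter> G -` B) x * f x)"
proof -
  note [measurable] = assms(2)
  have "integrable M (\<lambda>x. indicator S x * f x * indicator (G -` B \<inter> space M) x)"
    using assms(1) by (intro integrable_real_mult_indicator) measurable
  then show ?thesis
    by (rule Bochner_Integration.integrable_cong[OF refl, THEN iffD1, rotated]) (auto simp: indicator_def)
qed

lemma integrable_indicator_bounded:
  fixes f :: "'a \<Rightarrow> real"
  assumes "f \<in> borel_measurable M" "AE x in M. x \<in> S \<longrightarrow> \<bar>f x\<bar> \<le> K"
  shows "integrable M (\<lambda>x. indicator S x * f x)"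
proof (rule integrable_const_bound[where B="\<bar>K\<bar>"])
  show "AE x in M. norm (indicator S x * f x) \<le> \<bar>K\<bar>"
    using assms(2) by eventually_elim (auto simp: indicator_def)
qed (use assms(1) in measurable)

lemma integrable_indicator_cond_event: "C \<in> sets M \<Longrightarrow> integrable M (\<lambda>x. indicator S x * indicator C x :: real)"
  by (rule integrable_indicator_bounded[where K=1]) (auto simp: indicator_def)

lemma integrable_indicator_const: "integrable M (\<lambda>x. indicator S x * c :: real)"
proof -
  have "integrable M (indicator S :: 'a \<Rightarrow> real)"
    using emeasure_finite[of S] by (intro integrable_real_indicator S_sets) (simp add: less_top[symmetric])
  then show ?thesis by simp
qed

lemma cond_exp_version_const: "cond_exp_version M N G S (\<lambda>_. c) (\<lambda>_. c)"
  using integrable_indicator_const[of c] by (simp add: cond_exp_version_def)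

lemma cond_exp_version_mono:
  assumes g: "cond_exp_version M N G S f g" and g': "cond_exp_version M N G S f' g'"
    and f: "integrable M (\<lambda>x. indicator S x * f x)" and f': "integrable M (\<lambda>x. indicator S x * f' x)"
    and le: "AE x in M. x \<in> S \<longrightarrow> f x \<le> f' x"
  shows "AE x in M. x \<in> S \<longrightarrow> g (G x) \<le> g' (G x)"
proof -
  have [measurable]: "g \<in> borel_measurable N" "g' \<in> borel_measurable N"
    and gi: "integrable M (\<lambda>x. indicator S x * g (G x))"
    and g'i: "integrable M (\<lambda>x. indicator S x * g' (G x))"
    using g g' unfolding cond_exp_version_def by auto
  define B where "B = {y\<in>space N. g' y < g y}"
  have B[measurable]: "B \<in> sets N" unfolding B_def by measurable
  let ?d = "\<lambda>x. indicator (S \<inter> G -` B) x * (g (G x) - g' (G x))"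
  have d: "integrable M ?d"
    using integrable_indicator_preimage[OF gi B] integrable_indicator_preimage[OF g'i B]
    by (simp add: right_diff_distrib)
  have "(\<integral>x. ?d x \<partial>M) = (\<integral>x. indicator (S \<inter> G -` B) x * f x \<partial>M) - (\<integral>x. indicator (S \<inter> G -` B) x * f' x \<partial>M)"
    using g g' B integrable_indicator_preimage[OF gi B] integrable_indicator_preimage[OF g'i B]
    by (simp add: right_diff_distrib cond_exp_version_def)
  also have "\<dots> \<le> 0"
    using integrable_indicator_preimage[OF f B] integrable_indicator_preimage[OF f' B] le
    by (auto intro!: integral_mono_AE elim!: eventually_mono simp: indicator_def)
  finally have "(\<integral>x. ?d x \<partial>M) = 0"
    by (intro antisym integral_nonneg_AE) (auto simp: indicator_def B_def)
  then have "AE x in M. ?d x = 0"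
    using d by (subst (asm) integral_nonneg_eq_0_iff_AE) (auto simp: indicator_def B_def)
  then show ?thesis
    using AE_space by eventually_elim (auto simp: indicator_def B_def measurable_space[OF G_measurable])
qed

lemma cond_exp_version_nonneg:
  assumes "cond_exp_version M N G S f g" "integrable M (\<lambda>x. indicator S x * f x)"
    and "AE x in M. x \<in> S \<longrightarrow> 0 \<le> f x"
  shows "AE x in M. x \<in> S \<longrightarrow> 0 \<le> g (G x)"
  using cond_exp_version_mono[OF cond_exp_version_const assms(1) _ assms(2)] assms(3) by simp

lemma cond_exp_version_lincomb:
  assumes g1: "cond_exp_version M N G S f1 g1" and g2: "cond_exp_version M N G S f2 g2"
    and f1: "integrable M (\<lambda>x. indicator S x * f1 x)" and f2: "integrable M (\<lambda>x. indicator S x * f2 x)"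
  shows "cond_exp_version M N G S (\<lambda>x. \<alpha> * f1 x + \<beta> * f2 x) (\<lambda>y. \<alpha> * g1 y + \<beta> * g2 y)"
  unfolding cond_exp_version_def
proof (intro conjI ballI)
  have [measurable]: "g1 \<in> borel_measurable N" "g2 \<in> borel_measurable N"
    and g1i: "integrable M (\<lambda>x. indicator S x * g1 (G x))"
    and g2i: "integrable M (\<lambda>x. indicator S x * g2 (G x))"
    using g1 g2 unfolding cond_exp_version_def by auto
  show "(\<lambda>y. \<alpha> * g1 y + \<beta> * g2 y) \<in> borel_measurable N" by measurable
  show "integrable M (\<lambda>x. indicator S x * (\<alpha> * g1 (G x) + \<beta> * g2 (G x)))"
    using g1i g2i by (simp add: algebra_simps)
  fix B assume B: "B \<in> sets N"
  show "(\<integral>x. indicator (S \<inter> G -` B) x * (\<alpha> * f1 x + \<beta> * f2 x) \<partial>M)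
      = (\<integral>x. indicator (S \<inter> G -` B) x * (\<alpha> * g1 (G x) + \<beta> * g2 (G x)) \<partial>M)"
    using g1 g2 B integrable_indicator_preimage[OF f1 B] integrable_indicator_preimage[OF f2 B]
      integrable_indicator_preimage[OF g1i B] integrable_indicator_preimage[OF g2i B]
    by (simp add: algebra_simps cond_exp_version_def)
qed

lemma finite_measure_distr_density_indicator: "finite_measure (distr (density M (indicator S)) N G)"
proof (rule finite_measureI)
  have "emeasure (distr (density M (indicator S)) N G) (space N) = (\<integral>\<^sup>+x. indicator S x * indicator (space N) (G x) \<partial>M)"
    by (rule emeasure_distr_density) auto
  also have "\<dots> \<le> (\<integral>\<^sup>+x. 1 \<partial>M)"
    by (intro nn_integral_mono) (auto simp: indicator_def)
  also have "\<dots> < \<infinity>"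
    using emeasure_finite[of "space M"] by (auto simp: less_top[symmetric])
  finally show "emeasure (distr (density M (indicator S)) N G) (space (distr (density M (indicator S)) N G)) \<noteq> \<infinity>"
    by simp
qed

lemma ennreal_indicator_preimage_mult:
  "ennreal (indicator (S \<inter> G -` B) x * f x) = indicator S x * ennreal (f x) * indicator B (G x)"
  by (simp add: indicator_def)

lemma nn_cond_exp_version_const: "nn_cond_exp_version M N G S (\<lambda>_. c) (\<lambda>_. c)"
  by (simp add: nn_cond_exp_version_def)

lemma nn_cond_exp_version_nn_integral:
  assumes g: "nn_cond_exp_version M N G S f g" and [measurable]: "f \<in> borel_measurable M"
    and [measurable]: "k \<in> borel_measurable N"
  shows "(\<integral>\<^sup>+x. indicator S x * f x * k (G x) \<partial>M) = (\<integral>\<^sup>+x. indicator S x * g (G x) * k (G x) \<partial>M)"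
proof -
  have [measurable]: "g \<in> borel_measurable N" using g by (simp add: nn_cond_exp_version_def)
  have "distr (density M (\<lambda>x. indicator S x * f x)) N G = distr (density M (\<lambda>x. indicator S x * g (G x))) N G"
    using g by (intro measure_eqI) (simp_all add: emeasure_distr_density nn_cond_exp_version_def)
  then have "(\<integral>\<^sup>+y. k y \<partial>distr (density M (\<lambda>x. indicator S x * f x)) N G)
      = (\<integral>\<^sup>+y. k y \<partial>distr (density M (\<lambda>x. indicator S x * g (G x))) N G)" by simp
  then show ?thesis by (simp add: nn_integral_distr nn_integral_density)
qed

lemma nn_cond_exp_version_unique:
  assumes g1: "nn_cond_exp_version M N G S f g1" and g2: "nn_cond_exp_version M N G S f g2"
  shows "AE x in M. x \<in> S \<longrightarrow> g1 (G x) = g2 (G x)"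
proof -
  define P where "P = distr (density M (indicator S)) N G"
  interpret P: finite_measure P
    unfolding P_def by (rule finite_measure_distr_density_indicator)
  have [measurable]: "g1 \<in> borel_measurable N" "g2 \<in> borel_measurable N"
    using g1 g2 by (simp_all add: nn_cond_exp_version_def)
  then have [measurable]: "g1 \<in> borel_measurable P" "g2 \<in> borel_measurable P"
    by (simp_all add: P_def cong: measurable_cong_sets)
  have eq_sets: "{y \<in> space N. g1 y = g2 y} \<in> sets N" by measurable
  have "density P g1 = density P g2"
  proof (rule measure_eqI)
    fix B assume "B \<in> sets (density P g1)"
    then have B[measurable]: "B \<in> sets N" by (simp add: P_def)
    have "emeasure (density P g) B = (\<integral>\<^sup>+x. indicator S x * g (G x) * indicator B (G x) \<partial>M)"
      if [measurable]: "g \<in> borel_measurable N" for g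
      unfolding P_def by (simp add: emeasure_density nn_integral_distr nn_integral_density mult.assoc)
    then show "emeasure (density P g1) B = emeasure (density P g2) B"
      using g1 g2 B by (simp add: nn_cond_exp_version_def)
  qed simp
  then have "AE y in P. g1 y = g2 y" by (subst (asm) P.density_unique_iff) auto
  then have "AE x in density M (indicator S). g1 (G x) = g2 (G x)"
    unfolding P_def by (subst (asm) AE_distr_iff) (simp_all add: eq_sets)
  then show ?thesis by (subst (asm) AE_density) (auto elim!: eventually_mono simp: indicator_def)
qed

lemma nn_integral_indicator_preimage_eq_integral:
  assumes f: "integrable M (\<lambda>x. indicator S x * f x)" and B: "B \<in> sets N"
    and f_nonneg: "AE x in M. x \<in> S \<longrightarrow> 0 \<le> f x"
  shows "(\<integral>\<^sup>+x. indicator S x * ennreal (f x) * indicator B (G x) \<partial>M)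
    = ennreal (\<integral>x. indicator (S \<inter> G -` B) x * f x \<partial>M)"
  unfolding ennreal_indicator_preimage_mult[symmetric]
  using f_nonneg
  by (intro nn_integral_eq_integral integrable_indicator_preimage[OF f B])
    (auto elim!: eventually_mono simp: indicator_def)

lemma nn_cond_exp_version_of_cond_exp_version:
  assumes g: "cond_exp_version M N G S f g" and f: "integrable M (\<lambda>x. indicator S x * f x)"
    and f_nonneg: "AE x in M. x \<in> S \<longrightarrow> 0 \<le> f x"
  shows "nn_cond_exp_version M N G S (\<lambda>x. ennreal (f x)) (\<lambda>y. ennreal (g y))"
  unfolding nn_cond_exp_version_def
proof (intro conjI ballI)
  have [measurable]: "g \<in> borel_measurable N" and gi: "integrable M (\<lambda>x. indicator S x * g (G x))"
    using g by (simp_all add: cond_exp_version_def)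
  have g_nonneg: "AE x in M. x \<in> S \<longrightarrow> 0 \<le> g (G x)"
    by (rule cond_exp_version_nonneg[OF g f f_nonneg])
  show "(\<lambda>y. ennreal (g y)) \<in> borel_measurable N" by measurable
  fix B assume B: "B \<in> sets N"
  show "(\<integral>\<^sup>+x. indicator S x * ennreal (f x) * indicator B (G x) \<partial>M)
      = (\<integral>\<^sup>+x. indicator S x * ennreal (g (G x)) * indicator B (G x) \<partial>M)"
    using g B by (simp add: nn_integral_indicator_preimage_eq_integral[OF f B f_nonneg]
        nn_integral_indicator_preimage_eq_integral[OF gi B g_nonneg] cond_exp_version_def)
qed

lemma cond_exp_version_of_nn_cond_exp_version:
  assumes g: "nn_cond_exp_version M N G S (\<lambda>x. ennreal (f x)) (\<lambda>y. ennreal (g y))"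
    and [measurable]: "g \<in> borel_measurable N" and g_nonneg: "AE x in M. x \<in> S \<longrightarrow> 0 \<le> g (G x)"
    and f: "integrable M (\<lambda>x. indicator S x * f x)" and f_nonneg: "AE x in M. x \<in> S \<longrightarrow> 0 \<le> f x"
  shows "cond_exp_version M N G S f g"
proof -
  have f_integral: "(\<integral>\<^sup>+x. indicator S x * ennreal (f x) * indicator B (G x) \<partial>M)
    = ennreal (\<integral>x. indicator (S \<inter> G -` B) x * f x \<partial>M)" if "B \<in> sets N" for B
    using nn_integral_indicator_preimage_eq_integral[OF f that f_nonneg] .
  have gi: "integrable M (\<lambda>x. indicator S x * g (G x))"
  proof (rule integrableI_nonneg)
    have "(\<integral>\<^sup>+x. ennreal (indicator S x * g (G x)) \<partial>M)
        = (\<integral>\<^sup>+x. indicator S x * ennreal (g (G x)) * indicator (space N) (G x) \<partial>M)"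
      by (intro nn_integral_cong) (auto simp: indicator_def measurable_space[OF G_measurable])
    also have "\<dots> = ennreal (\<integral>x. indicator (S \<inter> G -` space N) x * f x \<partial>M)"
      using g by (simp add: nn_cond_exp_version_def f_integral)
    finally show "(\<integral>\<^sup>+x. ennreal (indicator S x * g (G x)) \<partial>M) < \<infinity>" by simp
  qed (use g_nonneg in \<open>auto elim!: eventually_mono simp: indicator_def\<close>)
  show ?thesis
    unfolding cond_exp_version_def
  proof (intro conjI ballI gi)
    fix B assume B: "B \<in> sets N"
    have "ennreal (\<integral>x. indicator (S \<inter> G -` B) x * f x \<partial>M)
        = ennreal (\<integral>x. indicator (S \<inter> G -` B) x * g (G x) \<partial>M)"
      using g B by (simp add: nn_cond_exp_version_def f_integral
          nn_integral_indicator_preimage_eq_integral[OF gi B] g_nonneg)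
    moreover have "0 \<le> (\<integral>x. indicator (S \<inter> G -` B) x * f x \<partial>M)"
      using f_nonneg by (intro integral_nonneg_AE) (auto elim!: eventually_mono simp: indicator_def)
    moreover have "0 \<le> (\<integral>x. indicator (S \<inter> G -` B) x * g (G x) \<partial>M)"
      using g_nonneg by (intro integral_nonneg_AE) (auto elim!: eventually_mono simp: indicator_def)
    ultimately show "(\<integral>x. indicator (S \<inter> G -` B) x * f x \<partial>M) = (\<integral>x. indicator (S \<inter> G -` B) x * g (G x) \<partial>M)"
      by simp
  qed simp
qed

lemma absolutely_continuous_distr_density_indicator:
  assumes [measurable]: "f \<in> borel_measurable M"
  shows "absolutely_continuous (distr (density M (indicator S)) N G)
    (distr (density M (\<lambda>x. indicator S x * f x)) N G)"
  unfolding absolutely_continuous_def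
proof
  fix B assume "B \<in> null_sets (distr (density M (indicator S)) N G)"
  then have B[measurable]: "B \<in> sets N" and "emeasure (distr (density M (indicator S)) N G) B = 0"
    by auto
  then have "(\<integral>\<^sup>+x. indicator S x * indicator B (G x) \<partial>M) = 0"
    by (simp add: emeasure_distr_density)
  then have "AE x in M. indicator S x * indicator B (G x) = (0::ennreal)"
    by (subst (asm) nn_integral_0_iff_AE) auto
  then have "(\<integral>\<^sup>+x. indicator S x * f x * indicator B (G x) \<partial>M) = 0"
    by (subst nn_integral_0_iff_AE) (auto elim!: eventually_mono simp: indicator_def)
  then show "B \<in> null_sets (distr (density M (\<lambda>x. indicator S x * f x)) N G)"
    by (simp add: null_sets_def emeasure_distr_density)
qed

lemma nn_cond_exp_version_exists:
  assumes [measurable]: "f \<in> borel_measurable M"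
    and finite: "(\<integral>\<^sup>+x. indicator S x * f x \<partial>M) < \<infinity>"
  shows "\<exists>g. g \<in> borel_measurable N \<and> (\<forall>y. 0 \<le> g y) \<and> nn_cond_exp_version M N G S f (\<lambda>y. ennreal (g y))"
proof -
  define P where "P = distr (density M (indicator S)) N G"
  define Q where "Q = distr (density M (\<lambda>x. indicator S x * f x)) N G"
  interpret P: finite_measure P
    unfolding P_def by (rule finite_measure_distr_density_indicator)
  have sets_P[simp]: "sets P = sets N" and space_P[simp]: "space P = space N" and sets_Q[simp]: "sets Q = sets N"
    unfolding P_def Q_def by simp_all
  have emeasure_Q: "emeasure Q B = (\<integral>\<^sup>+x. indicator S x * f x * indicator B (G x) \<partial>M)" if "B \<in> sets N" for B
    unfolding Q_def using that by (intro emeasure_distr_density) simp_all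
  have "absolutely_continuous P Q"
    unfolding P_def Q_def by (rule absolutely_continuous_distr_density_indicator) simp
  then obtain h where h[measurable]: "h \<in> borel_measurable N" and density_h: "density P h = Q"
    using P.Radon_Nikodym[of Q] by (auto cong: measurable_cong_sets)
  then have [measurable]: "h \<in> borel_measurable P" by (simp cong: measurable_cong_sets)
  have "(\<integral>\<^sup>+y. h y \<partial>P) = emeasure Q (space N)"
    unfolding density_h[symmetric] by (simp add: emeasure_density) (rule nn_integral_cong, auto)
  also have "\<dots> < \<infinity>"
    using finite by (simp add: emeasure_Q) (simp add: indicator_def measurable_space[OF G_measurable] cong: nn_integral_cong)
  finally have "AE y in P. h y \<noteq> \<infinity>" by (intro nn_integral_PInf_AE) auto
  then have density_g: "density P (\<lambda>y. ennreal (enn2real (h y))) = Q"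
    unfolding density_h[symmetric] by (intro density_cong) (auto elim!: eventually_mono simp: less_top)
  show ?thesis
  proof (intro exI conjI allI)
    show "(\<lambda>y. enn2real (h y)) \<in> borel_measurable N" by measurable
    show "0 \<le> enn2real (h y)" for y by simp
    show "nn_cond_exp_version M N G S f (\<lambda>y. ennreal (enn2real (h y)))"
      unfolding nn_cond_exp_version_def
    proof (intro conjI ballI)
      fix B assume [measurable]: "B \<in> sets N"
      have "(\<integral>\<^sup>+x. indicator S x * f x * indicator B (G x) \<partial>M) = emeasure (density P (\<lambda>y. ennreal (enn2real (h y)))) B"
        by (simp add: density_g emeasure_Q)
      also have "\<dots> = (\<integral>\<^sup>+x. indicator S x * ennreal (enn2real (h (G x))) * indicator B (G x) \<partial>M)"
        unfolding P_def by (simp add: emeasure_density nn_integral_distr nn_integral_density mult.assoc)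
      finally show "(\<integral>\<^sup>+x. indicator S x * f x * indicator B (G x) \<partial>M)
          = (\<integral>\<^sup>+x. indicator S x * ennreal (enn2real (h (G x))) * indicator B (G x) \<partial>M)" .
    qed measurable
  qed
qed

lemma cond_exp_version_exists:
  assumes [measurable]: "f \<in> borel_measurable M" and f: "integrable M (\<lambda>x. indicator S x * f x)"
    and f_nonneg: "AE x in M. x \<in> S \<longrightarrow> 0 \<le> f x"
  shows "\<exists>g. (\<forall>y. 0 \<le> g y) \<and> cond_exp_version M N G S f g"
proof -
  have "(\<integral>\<^sup>+x. indicator S x * ennreal (f x) \<partial>M) = (\<integral>\<^sup>+x. ennreal (indicator S x * f x) \<partial>M)"
    by (intro nn_integral_cong) (simp add: indicator_def)
  also have "\<dots> = ennreal (\<integral>x. indicator S x * f x \<partial>M)"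
    using f_nonneg by (intro nn_integral_eq_integral f) (auto elim!: eventually_mono simp: indicator_def)
  finally obtain g where [measurable]: "g \<in> borel_measurable N" and g_nonneg: "\<forall>y. 0 \<le> g y"
    and g: "nn_cond_exp_version M N G S (\<lambda>x. ennreal (f x)) (\<lambda>y. ennreal (g y))"
    using nn_cond_exp_version_exists[of "\<lambda>x. ennreal (f x)"] by auto
  show ?thesis
    using cond_exp_version_of_nn_cond_exp_version[OF g _ _ f f_nonneg] g_nonneg by auto
qed

lemma cond_prob_version_nonneg:
  "cond_prob_version M N G S C p \<Longrightarrow> C \<in> sets M \<Longrightarrow> AE x in M. x \<in> S \<longrightarrow> 0 \<le> p (G x)"
  unfolding cond_prob_version_def
  by (rule cond_exp_version_nonneg) (auto intro: integrable_indicator_cond_event)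

lemma nn_cond_exp_version_of_cond_prob_version:
  assumes "cond_prob_version M N G S C p" "C \<in> sets M"
  shows "nn_cond_exp_version M N G S (indicator C) (\<lambda>y. ennreal (p y))"
  using nn_cond_exp_version_of_cond_exp_version[of "indicator C" p] assms
  by (simp add: cond_prob_version_def integrable_indicator_cond_event ennreal_indicator)

lemma cond_prob_version_exists:
  "C \<in> sets M \<Longrightarrow> \<exists>p. (\<forall>y. 0 \<le> p y) \<and> cond_prob_version M N G S C p"
  unfolding cond_prob_version_def
  by (rule cond_exp_version_exists) (auto intro: integrable_indicator_cond_event)

lemma AE_cond_prob_pos_imp:
  assumes p: "cond_prob_version M N G S C p" and C[measurable]: "C \<in> sets M"
    and P: "{y \<in> space N. P y} \<in> sets N" and on_C: "AE x in M. x \<in> S \<inter> C \<longrightarrow> P (G x)"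
  shows "AE x in M. x \<in> S \<longrightarrow> 0 < p (G x) \<longrightarrow> P (G x)"
proof -
  define B where "B = space N - {y \<in> space N. P y}"
  have B: "B \<in> sets N" unfolding B_def using P by auto
  have pi: "integrable M (\<lambda>x. indicator S x * p (G x))"
    using p by (simp add: cond_prob_version_def cond_exp_version_def)
  have "(\<integral>x. indicator (S \<inter> G -` B) x * p (G x) \<partial>M) = (\<integral>x. indicator (S \<inter> G -` B) x * indicator C x \<partial>M)"
    using p B by (simp add: cond_prob_version_def cond_exp_version_def)
  also have "\<dots> = 0"
    using on_C AE_space
    by (intro integral_eq_zero_AE) (auto elim!: eventually_mono simp: indicator_def B_def measurable_space[OF G_measurable])
  finally have "AE x in M. indicator (S \<inter> G -` B) x * p (G x) = 0"
    using cond_prob_version_nonneg[OF p C]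
    by (subst (asm) integral_nonneg_eq_0_iff_AE[OF integrable_indicator_preimage[OF pi B]])
      (auto elim!: eventually_mono simp: indicator_def)
  then show ?thesis
    using AE_space by eventually_elim (auto simp: indicator_def B_def measurable_space[OF G_measurable])
qed

section \<open>Positivity and ignorability\<close>

lemma cond_prob_version_pos_on_event:
  assumes q: "cond_prob_version M N G S C q" and C[measurable]: "C \<in> sets M"
  shows "AE x in M. x \<in> S \<inter> C \<longrightarrow> 0 < q (G x)"
proof -
  have [measurable]: "q \<in> borel_measurable N"
    using q by (simp add: cond_prob_version_def cond_exp_version_def)
  define B where "B = {y \<in> space N. q y \<le> 0}"
  have B[measurable]: "B \<in> sets N" unfolding B_def by measurable
  have "(\<integral>x. indicator (S \<inter> G -` B) x * indicator C x \<partial>M) = (\<integral>x. indicator (S \<inter> G -` B) x * q (G x) \<partial>M)"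
    using q by (simp add: cond_prob_version_def cond_exp_version_def)
  also have "\<dots> \<le> 0"
  proof -
    have "0 \<le> (\<integral>x. - (indicator (S \<inter> G -` B) x * q (G x)) \<partial>M)"
      by (intro integral_nonneg_AE) (auto simp: indicator_def B_def)
    then show ?thesis by simp
  qed
  finally have "(\<integral>x. indicator (S \<inter> G -` B) x * indicator C x \<partial>M) = (0::real)"
    by (intro antisym integral_nonneg_AE) (auto simp: indicator_def)
  then have "AE x in M. indicator (S \<inter> G -` B) x * indicator C x = (0::real)"
    by (subst (asm) integral_nonneg_eq_0_iff_AE[OF
          integrable_indicator_preimage[OF integrable_indicator_cond_event[OF C] B]]) auto
  then show ?thesis
    using AE_space by eventually_elim (auto simp: indicator_def B_def measurable_space[OF G_measurable])
qed

lemma cond_prob_version_pos_of_refinement: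
  assumes H[measurable]: "H \<in> measurable M NH" and C[measurable]: "C \<in> sets M"
    and q: "cond_prob_version M N G S C q"
    and pos: "\<And>p. cond_prob_version M (N \<Otimes>\<^sub>M NH) (\<lambda>x. (G x, H x)) S C p
      \<Longrightarrow> AE x in M. x \<in> S \<longrightarrow> 0 < p (G x, H x)"
  shows "AE x in M. x \<in> S \<longrightarrow> 0 < q (G x)"
proof -
  interpret GH: conditioning M "N \<Otimes>\<^sub>M NH" "\<lambda>x. (G x, H x)" S by unfold_locales simp_all
  obtain p where p: "cond_prob_version M (N \<Otimes>\<^sub>M NH) (\<lambda>x. (G x, H x)) S C p"
    using GH.cond_prob_version_exists[OF C] by blast
  have [measurable]: "q \<in> borel_measurable N"
    using q by (simp add: cond_prob_version_def cond_exp_version_def)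
  have "{y \<in> space (N \<Otimes>\<^sub>M NH). 0 < q (fst y)} \<in> sets (N \<Otimes>\<^sub>M NH)" by measurable
  then have "AE x in M. x \<in> S \<longrightarrow> 0 < p (G x, H x) \<longrightarrow> 0 < q (fst (G x, H x))"
    using cond_prob_version_pos_on_event[OF q C]
    by (intro GH.AE_cond_prob_pos_imp[OF p C]) (auto elim!: eventually_mono)
  with pos[OF p] show ?thesis by eventually_elim auto
qed

lemma cond_indep_rectangle:
  assumes Z[measurable]: "Z \<in> measurable M NZ" and C[measurable]: "C \<in> sets M"
    and q: "cond_prob_version M N G S C q"
    and indep: "\<And>B p r. B \<in> sets NZ \<Longrightarrow> cond_prob_version M N G S {x \<in> C. Z x \<in> B} p
      \<Longrightarrow> cond_prob_version M N G S {x \<in> space M. Z x \<in> B} r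
      \<Longrightarrow> AE x in M. x \<in> S \<longrightarrow> p (G x) = q (G x) * r (G x)"
    and [measurable]: "B \<in> sets N" "B' \<in> sets NZ"
  shows "(\<integral>\<^sup>+x. indicator S x * indicator C x * indicator (B \<times> B') (G x, Z x) \<partial>M)
    = (\<integral>\<^sup>+x. indicator S x * ennreal (q (G x)) * indicator (B \<times> B') (G x, Z x) \<partial>M)"
proof -
  have [measurable]: "q \<in> borel_measurable N"
    using q by (simp add: cond_prob_version_def cond_exp_version_def)
  have q_nonneg: "AE x in M. x \<in> S \<longrightarrow> 0 \<le> q (G x)"
    by (rule cond_prob_version_nonneg[OF q C])
  have C_B'[measurable]: "{x \<in> C. Z x \<in> B'} \<in> sets M"
    using sets.sets_into_space[OF C] by (auto intro: sets.sets_Collect_conj)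
  have Z_B'[measurable]: "{x \<in> space M. Z x \<in> B'} \<in> sets M" by measurable
  obtain p where p: "cond_prob_version M N G S {x \<in> C. Z x \<in> B'} p"
    using cond_prob_version_exists[OF C_B'] by auto
  obtain r where r_nonneg: "\<And>y. 0 \<le> r y" and r: "cond_prob_version M N G S {x \<in> space M. Z x \<in> B'} r"
    using cond_prob_version_exists[OF Z_B'] by auto
  have "AE x in M. x \<in> S \<longrightarrow> p (G x) = q (G x) * r (G x)"
    by (rule indep) fact+
  then have factor: "AE x in M. x \<in> S \<longrightarrow> ennreal (p (G x)) = ennreal (q (G x)) * ennreal (r (G x))"
    using q_nonneg by eventually_elim (simp add: ennreal_mult r_nonneg)
  have "(\<integral>\<^sup>+x. indicator S x * indicator C x * indicator (B \<times> B') (G x, Z x) \<partial>M)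
      = (\<integral>\<^sup>+x. indicator S x * indicator {x \<in> C. Z x \<in> B'} x * indicator B (G x) \<partial>M)"
    by (intro nn_integral_cong) (auto simp: indicator_def)
  also have "\<dots> = (\<integral>\<^sup>+x. indicator S x * ennreal (p (G x)) * indicator B (G x) \<partial>M)"
    using nn_cond_exp_version_of_cond_prob_version[OF p] by (simp add: nn_cond_exp_version_def)
  also have "\<dots> = (\<integral>\<^sup>+x. indicator S x * ennreal (r (G x)) * (ennreal (q (G x)) * indicator B (G x)) \<partial>M)"
    using factor by (intro nn_integral_cong_AE) (auto elim!: eventually_mono simp: indicator_def mult_ac)
  also have "\<dots> = (\<integral>\<^sup>+x. indicator S x * indicator {x \<in> space M. Z x \<in> B'} x * (ennreal (q (G x)) * indicator B (G x)) \<partial>M)"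
    by (intro nn_cond_exp_version_nn_integral[symmetric] nn_cond_exp_version_of_cond_prob_version[OF r]) simp_all
  also have "\<dots> = (\<integral>\<^sup>+x. indicator S x * ennreal (q (G x)) * indicator (B \<times> B') (G x, Z x) \<partial>M)"
    by (intro nn_integral_cong) (auto simp: indicator_def)
  finally show ?thesis .
qed

text \<open>\<open>cond_indep_rectangle\<close> covers only rectangles \<open>B \<times> B'\<close>; Dynkin's \<open>\<pi>\<close>-\<open>\<lambda>\<close>
  theorem extends the identity to all of \<open>N \<Otimes>\<^sub>M NZ\<close>.\<close>

lemma cond_indep_nn_integral:
  assumes Z[measurable]: "Z \<in> measurable M NZ" and C[measurable]: "C \<in> sets M"
    and q: "cond_prob_version M N G S C q"
    and indep: "\<And>B p r. B \<in> sets NZ \<Longrightarrow> cond_prob_version M N G S {x \<in> C. Z x \<in> B} p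
      \<Longrightarrow> cond_prob_version M N G S {x \<in> space M. Z x \<in> B} r
      \<Longrightarrow> AE x in M. x \<in> S \<longrightarrow> p (G x) = q (G x) * r (G x)"
    and [measurable]: "k \<in> borel_measurable (N \<Otimes>\<^sub>M NZ)"
  shows "(\<integral>\<^sup>+x. indicator S x * indicator C x * k (G x, Z x) \<partial>M)
    = (\<integral>\<^sup>+x. indicator S x * ennreal (q (G x)) * k (G x, Z x) \<partial>M)"
proof -
  have [measurable]: "q \<in> borel_measurable N"
    using q by (simp add: cond_prob_version_def cond_exp_version_def)
  define GZ where "GZ x = (G x, Z x)" for x
  have GZ[measurable]: "GZ \<in> measurable M (N \<Otimes>\<^sub>M NZ)" unfolding GZ_def by measurable
  define L where "L = distr (density M (\<lambda>x. indicator S x * indicator C x)) (N \<Otimes>\<^sub>M NZ) GZ"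
  define R where "R = distr (density M (\<lambda>x. indicator S x * ennreal (q (G x)))) (N \<Otimes>\<^sub>M NZ) GZ"
  let ?E = "{B \<times> B' | B B'. B \<in> sets N \<and> B' \<in> sets NZ}"
  have "L = R"
  proof (rule measure_eqI_generator_eq_countable[where E="?E" and \<Omega>="space N \<times> space NZ" and A="{space N \<times> space NZ}"])
    show "Int_stable ?E" by (rule Int_stable_pair_measure_generator)
    show "?E \<subseteq> Pow (space N \<times> space NZ)"
      by (auto dest: sets.sets_into_space)
    show "sets L = sigma_sets (space N \<times> space NZ) ?E" "sets R = sigma_sets (space N \<times> space NZ) ?E"
      unfolding L_def R_def by (simp_all add: sets_pair_measure)
    show "{space N \<times> space NZ} \<subseteq> ?E" by auto
    have "emeasure L (space N \<times> space NZ)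
        = (\<integral>\<^sup>+x. indicator S x * indicator C x * indicator (space N \<times> space NZ) (GZ x) \<partial>M)"
      unfolding L_def by (intro emeasure_distr_density) (simp_all add: space_pair_measure[symmetric])
    also have "\<dots> \<le> (\<integral>\<^sup>+x. 1 \<partial>M)"
      by (intro nn_integral_mono) (auto simp: indicator_def)
    also have "\<dots> < \<infinity>"
      using emeasure_finite[of "space M"] by (auto simp: less_top[symmetric])
    finally show "\<And>X. X \<in> {space N \<times> space NZ} \<Longrightarrow> emeasure L X \<noteq> \<infinity>" by auto
  next
    fix X assume "X \<in> ?E"
    then obtain B B' where X: "X = B \<times> B'" and [measurable]: "B \<in> sets N" "B' \<in> sets NZ" by auto
    show "emeasure L X = emeasure R X"
      using cond_indep_rectangle[OF Z C q indep, where B=B and B'=B']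
      unfolding L_def R_def X by (simp add: emeasure_distr_density GZ_def)
  qed simp_all
  then have "(\<integral>\<^sup>+y. k y \<partial>L) = (\<integral>\<^sup>+y. k y \<partial>R)" by simp
  then show ?thesis
    unfolding L_def R_def by (simp add: nn_integral_distr nn_integral_density GZ_def)
qed

text \<open>Multiplying and dividing by the propensity \<open>q\<close> moves the integral from \<open>S\<close> to
  \<open>S \<inter> C\<close> and back, via the factorization above.\<close>

lemma nn_cond_exp_version_ignorable:
  assumes Z[measurable]: "Z \<in> measurable M NZ" and C[measurable]: "C \<in> sets M"
    and q: "cond_prob_version M N G S C q" and q_pos: "AE x in M. x \<in> S \<longrightarrow> 0 < q (G x)"
    and indep: "\<And>B p r. B \<in> sets NZ \<Longrightarrow> cond_prob_version M N G S {x \<in> C. Z x \<in> B} p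
      \<Longrightarrow> cond_prob_version M N G S {x \<in> space M. Z x \<in> B} r
      \<Longrightarrow> AE x in M. x \<in> S \<longrightarrow> p (G x) = q (G x) * r (G x)"
    and [measurable]: "h \<in> borel_measurable NZ"
    and mu: "nn_cond_exp_version M N G (S \<inter> C) (\<lambda>x. h (Z x)) mu"
  shows "nn_cond_exp_version M N G S (\<lambda>x. h (Z x)) mu"
proof -
  interpret SC: conditioning M N G "S \<inter> C" by unfold_locales simp_all
  have [measurable]: "q \<in> borel_measurable N" "mu \<in> borel_measurable N"
    using q mu by (simp_all add: cond_prob_version_def cond_exp_version_def nn_cond_exp_version_def)
  note joint = cond_indep_nn_integral[OF Z C q indep]
  show ?thesis
    unfolding nn_cond_exp_version_def
  proof (intro conjI ballI)
    fix B assume [measurable]: "B \<in> sets N"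
    define w where "w v = indicator B v / ennreal (q v)" for v
    have [measurable]: "w \<in> borel_measurable N" unfolding w_def by measurable
    have "(\<integral>\<^sup>+x. indicator S x * h (Z x) * indicator B (G x) \<partial>M)
        = (\<integral>\<^sup>+x. indicator S x * ennreal (q (G x)) * (h (Z x) * w (G x)) \<partial>M)"
      by (intro nn_integral_cong_AE, use q_pos in eventually_elim)
        (simp add: w_def mult.assoc ennreal_mult_divide_cancel split: split_indicator)
    also have "\<dots> = (\<integral>\<^sup>+x. indicator S x * indicator C x * (h (Z x) * w (G x)) \<partial>M)"
      using joint[where k="\<lambda>p. h (snd p) * w (fst p)"] by simp
    also have "\<dots> = (\<integral>\<^sup>+x. indicator (S \<inter> C) x * h (Z x) * w (G x) \<partial>M)"
      by (intro nn_integral_cong) (simp add: indicator_def)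
    also have "\<dots> = (\<integral>\<^sup>+x. indicator (S \<inter> C) x * mu (G x) * w (G x) \<partial>M)"
      by (rule SC.nn_cond_exp_version_nn_integral[OF mu]) measurable
    also have "\<dots> = (\<integral>\<^sup>+x. indicator S x * indicator C x * (mu (G x) * w (G x)) \<partial>M)"
      by (intro nn_integral_cong) (simp add: indicator_def)
    also have "\<dots> = (\<integral>\<^sup>+x. indicator S x * ennreal (q (G x)) * (mu (G x) * w (G x)) \<partial>M)"
      using joint[where k="\<lambda>p. mu (fst p) * w (fst p)"] by simp
    also have "\<dots> = (\<integral>\<^sup>+x. indicator S x * mu (G x) * indicator B (G x) \<partial>M)"
      by (intro nn_integral_cong_AE, use q_pos in eventually_elim)
        (simp add: w_def mult.assoc ennreal_mult_divide_cancel split: split_indicator)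
    finally show "(\<integral>\<^sup>+x. indicator S x * h (Z x) * indicator B (G x) \<partial>M)
        = (\<integral>\<^sup>+x. indicator S x * mu (G x) * indicator B (G x) \<partial>M)" .
  qed fact
qed

lemma cond_exp_version_ignorable:
  assumes Z[measurable]: "Z \<in> measurable M NZ" and H[measurable]: "H \<in> measurable M NH"
    and C[measurable]: "C \<in> sets M"
    and pos: "\<And>p. cond_prob_version M (N \<Otimes>\<^sub>M NH) (\<lambda>x. (G x, H x)) S C p
      \<Longrightarrow> AE x in M. x \<in> S \<longrightarrow> 0 < p (G x, H x)"
    and indep: "\<And>B p q r. B \<in> sets NZ \<Longrightarrow> cond_prob_version M N G S {x \<in> C. Z x \<in> B} p
      \<Longrightarrow> cond_prob_version M N G S C q \<Longrightarrow> cond_prob_version M N G S {x \<in> space M. Z x \<in> B} r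
      \<Longrightarrow> AE x in M. x \<in> S \<longrightarrow> p (G x) = q (G x) * r (G x)"
    and [measurable]: "h \<in> borel_measurable NZ"
    and bounds: "AE x in M. x \<in> S \<longrightarrow> l \<le> h (Z x) \<and> h (Z x) \<le> u"
    and mu: "cond_exp_version M N G (S \<inter> C) (\<lambda>x. h (Z x)) mu"
  shows "cond_exp_version M N G S (\<lambda>x. h (Z x)) mu"
proof -
  interpret SC: conditioning M N G "S \<inter> C" by unfold_locales simp_all
  have [measurable]: "mu \<in> borel_measurable N" using mu by (simp add: cond_exp_version_def)
  obtain q where q: "cond_prob_version M N G S C q"
    using cond_prob_version_exists[OF C] by blast
  have q_pos: "AE x in M. x \<in> S \<longrightarrow> 0 < q (G x)"
    by (rule cond_prob_version_pos_of_refinement[OF H C q pos])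
  have const: "integrable M (\<lambda>x. indicator T x * c)" if "T \<in> sets M" for T and c :: real
    using that by (intro integrable_const_bound[where B="\<bar>c\<bar>"]) (auto simp: indicator_def)
  have hZ: "integrable M (\<lambda>x. indicator T x * h (Z x))" if "T \<subseteq> S" "T \<in> sets M" for T
    using bounds that
    by (intro integrable_const_bound[where B="\<bar>l\<bar> + \<bar>u\<bar>"]) (auto elim!: eventually_mono simp: indicator_def)
  have shifted: "integrable M (\<lambda>x. indicator T x * (h (Z x) - l))" if "T \<subseteq> S" "T \<in> sets M" for T
    using hZ[OF that] const[OF that(2), of l] by (simp add: right_diff_distrib)
  have shifted_nonneg: "AE x in M. x \<in> T \<longrightarrow> 0 \<le> h (Z x) - l" if "T \<subseteq> S" for T
    using bounds that by (auto elim!: eventually_mono)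
  have mu_shift: "cond_exp_version M N G (S \<inter> C) (\<lambda>x. h (Z x) - l) (\<lambda>y. mu y - l)"
    using SC.cond_exp_version_lincomb[OF mu SC.cond_exp_version_const hZ const, of 1 "- l" 1] by simp
  have "nn_cond_exp_version M N G S (\<lambda>x. ennreal (h (Z x) - l)) (\<lambda>y. ennreal (mu y - l))"
    by (rule nn_cond_exp_version_ignorable[OF Z C q q_pos indep[OF _ _ q], where h="\<lambda>z. ennreal (h z - l)"])
      (use SC.nn_cond_exp_version_of_cond_exp_version[OF mu_shift shifted shifted_nonneg] in auto)
  moreover have "AE x in M. x \<in> S \<longrightarrow> 0 \<le> mu (G x) - l"
  proof -
    have on_C: "AE x in M. x \<in> S \<inter> C \<longrightarrow> 0 \<le> mu (G x) - l"
      by (rule SC.cond_exp_version_nonneg[OF mu_shift shifted shifted_nonneg]) auto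
    have "AE x in M. x \<in> S \<longrightarrow> 0 < q (G x) \<longrightarrow> 0 \<le> mu (G x) - l"
      by (rule AE_cond_prob_pos_imp[OF q C _ on_C]) measurable
    with q_pos show ?thesis by eventually_elim auto
  qed
  ultimately have "cond_exp_version M N G S (\<lambda>x. h (Z x) - l) (\<lambda>y. mu y - l)"
    by (intro cond_exp_version_of_nn_cond_exp_version shifted shifted_nonneg) simp_all
  from cond_exp_version_lincomb[OF this cond_exp_version_const shifted const, of 1 l 1]
  show ?thesis by simp
qed

end

section \<open>Refinement by a finitely valued covariate\<close>

locale finite_refinement = conditioning +
  fixes W :: "'a \<Rightarrow> 'w" and nu :: "'g \<Rightarrow> 'w \<Rightarrow> real"
  assumes W_measurable[measurable]: "W \<in> measurable M (count_space UNIV)"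
    and finite_range: "finite (W ` space M)"
    and nu: "\<And>w. cond_prob_version M N G S {x \<in> space M. W x = w} (\<lambda>v. nu v w)"
begin

sublocale GW: conditioning M "N \<Otimes>\<^sub>M count_space UNIV" "\<lambda>x. (G x, W x)" S
  by unfold_locales simp_all

lemma nu_measurable[measurable]: "(\<lambda>v. nu v w) \<in> borel_measurable N"
  using nu[of w] by (simp add: cond_prob_version_def cond_exp_version_def)

lemma section_measurable[measurable]:
  assumes "t \<in> borel_measurable (N \<Otimes>\<^sub>M count_space UNIV)"
  shows "(\<lambda>v. t (v, w)) \<in> borel_measurable N"
proof -
  have "(\<lambda>v. (v, w)) \<in> measurable N (N \<Otimes>\<^sub>M count_space UNIV)" by measurable
  then show ?thesis using assms by (rule measurable_compose)
qed

lemma sum_indicator_level_sets: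
  fixes F :: "'w \<Rightarrow> 'b :: comm_semiring_1"
  assumes "x \<in> space M"
  shows "(\<Sum>w\<in>W ` space M. indicator {x \<in> space M. W x = w} x * F w) = F (W x)"
proof -
  have "(\<Sum>w\<in>W ` space M. indicator {x \<in> space M. W x = w} x * F w) = (\<Sum>w\<in>W ` space M. if W x = w then F w else 0)"
    using assms by (intro sum.cong) (auto simp: indicator_def)
  also have "\<dots> = F (W x)" using assms finite_range by (simp add: sum.delta)
  finally show ?thesis .
qed

lemma nn_cond_exp_version_total:
  assumes [measurable]: "f \<in> borel_measurable M"
    and t: "nn_cond_exp_version M (N \<Otimes>\<^sub>M count_space UNIV) (\<lambda>x. (G x, W x)) S f t"
  shows "nn_cond_exp_version M N G S f (\<lambda>v. \<Sum>w\<in>W ` space M. ennreal (nu v w) * t (v, w))"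
  unfolding nn_cond_exp_version_def
proof (intro conjI ballI)
  have [measurable]: "t \<in> borel_measurable (N \<Otimes>\<^sub>M count_space UNIV)"
    using t by (simp add: nn_cond_exp_version_def)
  show "(\<lambda>v. \<Sum>w\<in>W ` space M. ennreal (nu v w) * t (v, w)) \<in> borel_measurable N" by measurable
  fix B assume [measurable]: "B \<in> sets N"
  let ?C = "\<lambda>w. {x \<in> space M. W x = w}"
  have "(\<integral>\<^sup>+x. indicator S x * f x * indicator B (G x) \<partial>M)
      = (\<integral>\<^sup>+x. indicator S x * t (G x, W x) * indicator B (G x) \<partial>M)"
    using GW.nn_cond_exp_version_nn_integral[OF t, of "\<lambda>p. indicator B (fst p)"] by simp
  also have "\<dots> = (\<integral>\<^sup>+x. (\<Sum>w\<in>W ` space M. indicator S x * indicator (?C w) x * (t (G x, w) * indicator B (G x))) \<partial>M)"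
  proof (intro nn_integral_cong)
    fix x assume "x \<in> space M"
    then show "indicator S x * t (G x, W x) * indicator B (G x)
        = (\<Sum>w\<in>W ` space M. indicator S x * indicator (?C w) x * (t (G x, w) * indicator B (G x)))"
      using sum_indicator_level_sets[of x "\<lambda>w. indicator S x * t (G x, w) * indicator B (G x)"]
      by (simp add: mult_ac)
  qed
  also have "\<dots> = (\<Sum>w\<in>W ` space M. \<integral>\<^sup>+x. indicator S x * indicator (?C w) x * (t (G x, w) * indicator B (G x)) \<partial>M)"
    by (intro nn_integral_sum) measurable
  also have "\<dots> = (\<Sum>w\<in>W ` space M. \<integral>\<^sup>+x. indicator S x * ennreal (nu (G x) w) * (t (G x, w) * indicator B (G x)) \<partial>M)"
    by (intro sum.cong refl nn_cond_exp_version_nn_integral nn_cond_exp_version_of_cond_prob_version[OF nu]) measurable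
  also have "\<dots> = (\<integral>\<^sup>+x. indicator S x * (\<Sum>w\<in>W ` space M. ennreal (nu (G x) w) * t (G x, w)) * indicator B (G x) \<partial>M)"
    by (subst nn_integral_sum[symmetric]) (measurable, simp add: sum_distrib_left sum_distrib_right mult_ac)
  finally show "(\<integral>\<^sup>+x. indicator S x * f x * indicator B (G x) \<partial>M)
      = (\<integral>\<^sup>+x. indicator S x * (\<Sum>w\<in>W ` space M. ennreal (nu (G x) w) * t (G x, w)) * indicator B (G x) \<partial>M)" .
qed

lemma cond_prob_version_simplex:
  "AE x in M. x \<in> S \<longrightarrow> (\<forall>w\<in>W ` space M. 0 \<le> nu (G x) w) \<and> (\<Sum>w\<in>W ` space M. nu (G x) w) = 1"
proof -
  have nonneg: "AE x in M. x \<in> S \<longrightarrow> (\<forall>w\<in>W ` space M. 0 \<le> nu (G x) w)"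
    using AE_finite_allI[OF finite_range, of "\<lambda>w x. x \<in> S \<longrightarrow> 0 \<le> nu (G x) w"]
      cond_prob_version_nonneg[OF nu] by auto
  have "nn_cond_exp_version M N G S (\<lambda>_. 1) (\<lambda>v. \<Sum>w\<in>W ` space M. ennreal (nu v w) * 1)"
    by (intro nn_cond_exp_version_total GW.nn_cond_exp_version_const) simp
  then have "AE x in M. x \<in> S \<longrightarrow> (\<Sum>w\<in>W ` space M. ennreal (nu (G x) w)) = 1"
    using nn_cond_exp_version_unique[OF _ nn_cond_exp_version_const] by fastforce
  with nonneg show ?thesis
  proof eventually_elim
    case (elim x)
    show ?case
    proof
      assume "x \<in> S"
      with elim have "\<And>w. w \<in> W ` space M \<Longrightarrow> 0 \<le> nu (G x) w" by auto
      with elim \<open>x \<in> S\<close> show "(\<forall>w\<in>W ` space M. 0 \<le> nu (G x) w) \<and> (\<Sum>w\<in>W ` space M. nu (G x) w) = 1"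
        by (simp add: sum_nonneg)
    qed
  qed
qed

lemma cond_exp_version_bounds_where_pos:
  assumes t: "cond_exp_version M (N \<Otimes>\<^sub>M count_space UNIV) (\<lambda>x. (G x, W x)) S f t"
    and [measurable]: "f \<in> borel_measurable M" and bounds: "AE x in M. x \<in> S \<longrightarrow> l \<le> f x \<and> f x \<le> u"
  shows "AE x in M. x \<in> S \<longrightarrow> (\<forall>w\<in>W ` space M. 0 < nu (G x) w \<longrightarrow> l \<le> t (G x, w) \<and> t (G x, w) \<le> u)"
proof -
  have [measurable]: "t \<in> borel_measurable (N \<Otimes>\<^sub>M count_space UNIV)"
    using t by (simp add: cond_exp_version_def)
  have f: "integrable M (\<lambda>x. indicator S x * f x)"
    using bounds by (intro integrable_indicator_bounded[where K="\<bar>l\<bar> + \<bar>u\<bar>"]) (auto elim!: eventually_mono)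
  have "AE x in M. x \<in> S \<longrightarrow> l \<le> t (G x, W x)"
    by (rule GW.cond_exp_version_mono[OF GW.cond_exp_version_const[of l] t integrable_indicator_const f])
      (use bounds in \<open>auto elim!: eventually_mono\<close>)
  moreover have "AE x in M. x \<in> S \<longrightarrow> t (G x, W x) \<le> u"
    by (rule GW.cond_exp_version_mono[OF t GW.cond_exp_version_const[of u] f integrable_indicator_const])
      (use bounds in \<open>auto elim!: eventually_mono\<close>)
  ultimately have "AE x in M. x \<in> S \<longrightarrow> l \<le> t (G x, W x) \<and> t (G x, W x) \<le> u"
    by eventually_elim simp
  then have "AE x in M. x \<in> S \<longrightarrow> 0 < nu (G x) w \<longrightarrow> l \<le> t (G x, w) \<and> t (G x, w) \<le> u" for w
    by (intro AE_cond_prob_pos_imp[OF nu]) (auto elim!: eventually_mono)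
  then have "AE x in M. \<forall>w\<in>W ` space M. x \<in> S \<longrightarrow> 0 < nu (G x) w \<longrightarrow> l \<le> t (G x, w) \<and> t (G x, w) \<le> u"
    by (intro AE_finite_allI[OF finite_range])
  then show ?thesis by eventually_elim auto
qed

lemma cond_exp_version_total:
  assumes g: "cond_exp_version M N G S f g"
    and t: "cond_exp_version M (N \<Otimes>\<^sub>M count_space UNIV) (\<lambda>x. (G x, W x)) S f t"
    and [measurable]: "f \<in> borel_measurable M" and bounds: "AE x in M. x \<in> S \<longrightarrow> l \<le> f x \<and> f x \<le> u"
  shows "AE x in M. x \<in> S \<longrightarrow> g (G x) = (\<Sum>w\<in>W ` space M. nu (G x) w * t (G x, w))"
proof -
  have f: "integrable M (\<lambda>x. indicator S x * f x)"
    using bounds by (intro integrable_indicator_bounded[where K="\<bar>l\<bar> + \<bar>u\<bar>"]) (auto elim!: eventually_mono)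
  have f_shift: "integrable M (\<lambda>x. indicator S x * (f x - l))"
    using f integrable_indicator_const[of l] by (simp add: right_diff_distrib)
  have f_shift_nonneg: "AE x in M. x \<in> S \<longrightarrow> 0 \<le> f x - l"
    using bounds by (auto elim!: eventually_mono)
  have g_shift: "cond_exp_version M N G S (\<lambda>x. f x - l) (\<lambda>y. g y - l)"
    using cond_exp_version_lincomb[OF g cond_exp_version_const f integrable_indicator_const, of 1 "- l" 1] by simp
  have t_shift: "cond_exp_version M (N \<Otimes>\<^sub>M count_space UNIV) (\<lambda>x. (G x, W x)) S (\<lambda>x. f x - l) (\<lambda>y. t y - l)"
    using GW.cond_exp_version_lincomb[OF t GW.cond_exp_version_const f integrable_indicator_const, of 1 "- l" 1] by simp
  have "nn_cond_exp_version M N G S (\<lambda>x. ennreal (f x - l))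
      (\<lambda>v. \<Sum>w\<in>W ` space M. ennreal (nu v w) * ennreal (t (v, w) - l))"
    using nn_cond_exp_version_total[OF _ GW.nn_cond_exp_version_of_cond_exp_version[OF t_shift f_shift f_shift_nonneg]]
    by simp
  then have eq: "AE x in M. x \<in> S \<longrightarrow>
      ennreal (g (G x) - l) = (\<Sum>w\<in>W ` space M. ennreal (nu (G x) w) * ennreal (t (G x, w) - l))"
    by (rule nn_cond_exp_version_unique[OF nn_cond_exp_version_of_cond_exp_version[OF g_shift f_shift f_shift_nonneg]])
  have g_lower: "AE x in M. x \<in> S \<longrightarrow> 0 \<le> g (G x) - l"
    by (rule cond_exp_version_nonneg[OF g_shift f_shift f_shift_nonneg])
  have t_lower: "AE x in M. x \<in> S \<longrightarrow> (\<forall>w\<in>W ` space M. 0 < nu (G x) w \<longrightarrow> l \<le> t (G x, w) \<and> t (G x, w) \<le> u)"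
    by (rule cond_exp_version_bounds_where_pos[OF t _ bounds]) measurable
  show ?thesis
    using eq g_lower cond_prob_version_simplex t_lower
    by eventually_elim (auto intro!: ennreal_shifted_mixture_eq[OF finite_range])
qed

end

section \<open>Bounds on the conditional effect\<close>

lemma gamma_bounds:
  fixes nu t :: "'w \<Rightarrow> real"
  assumes F: "finite F" and nonneg: "\<forall>v\<in>F. 0 \<le> nu v" and sum_1: "(\<Sum>v\<in>F. nu v) = 1"
    and t_bounds: "\<forall>v\<in>F. 0 < nu v \<longrightarrow> a - b \<le> t v \<and> t v \<le> b - a"
    and mixture: "m1 - m0 = (\<Sum>v\<in>F. nu v * t v)"
  shows "\<forall>w\<in>F. 0 < nu w \<longrightarrow> gamma_l a b m1 m0 (nu w) \<le> t w \<and> t w \<le> gamma_u a b m1 m0 (nu w)"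
proof (intro ballI impI)
  fix w assume w: "w \<in> F" and pos: "0 < nu w"
  have weighted_bound: "nu v * c \<le> nu v * t v" "nu v * t v \<le> nu v * c'"
    if "v \<in> F" "\<forall>v\<in>F. 0 < nu v \<longrightarrow> c \<le> t v \<and> t v \<le> c'" for v c c'
    using that nonneg by (cases "nu v = 0"; auto intro: mult_left_mono)+
  have rest: "(\<Sum>v\<in>F - {w}. nu v * t v) = m1 - m0 - nu w * t w"
    using mixture sum.remove[OF F w, of "\<lambda>v. nu v * t v"] by simp
  have "(\<Sum>v\<in>F - {w}. nu v) = 1 - nu w"
    using sum_1 sum.remove[OF F w, of nu] by simp
  then have mass: "(\<Sum>v\<in>F - {w}. nu v * c) = c * (1 - nu w)" for c
    by (metis mult.commute sum_distrib_right)
  have "(a - b) * (1 - nu w) \<le> (\<Sum>v\<in>F - {w}. nu v * t v)"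
    unfolding mass[symmetric] using t_bounds by (intro sum_mono weighted_bound) auto
  moreover have "(\<Sum>v\<in>F - {w}. nu v * t v) \<le> (b - a) * (1 - nu w)"
    unfolding mass[symmetric] using t_bounds by (intro sum_mono weighted_bound) auto
  ultimately have "(m1 - m0 - (b - a) * (1 - nu w)) / nu w \<le> t w"
    and "t w \<le> (m1 - m0 - (a - b) * (1 - nu w)) / nu w"
    using pos by (simp_all add: rest pos_divide_le_eq pos_le_divide_eq mult.commute)
  then show "gamma_l a b m1 m0 (nu w) \<le> t w \<and> t w \<le> gamma_u a b m1 m0 (nu w)"
    using t_bounds w pos by (simp add: gamma_l_def gamma_u_def)
qed

lemma conditional_treatment_effect_version:
  fixes M :: "'a measure" and MV :: "'v measure"
    and V :: "'a \<Rightarrow> 'v" and W :: "'a \<Rightarrow> 'w"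
    and E A :: "'a \<Rightarrow> bool" and Y0 Y1 :: "'a \<Rightarrow> real" and a b :: real
    and mu1 mu0 :: "'v \<Rightarrow> real"
  assumes prob: "prob_space M"
    and [measurable]: "V \<in> measurable M MV" "W \<in> measurable M (count_space UNIV)"
      "E \<in> measurable M (count_space UNIV)" "A \<in> measurable M (count_space UNIV)"
      "Y0 \<in> borel_measurable M" "Y1 \<in> borel_measurable M"
    and bounded: "AE x in M. a \<le> Y0 x \<and> Y0 x \<le> b \<and> a \<le> Y1 x \<and> Y1 x \<le> b"
    and unconfounded:
      "\<forall>a'::bool. \<forall>B\<in>sets (borel :: (real \<times> real) measure). \<forall>p q r.
         cond_prob_version M MV V {x\<in>space M. E x}
             {x\<in>space M. A x = a' \<and> (Y0 x, Y1 x) \<in> B} p \<and>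
         cond_prob_version M MV V {x\<in>space M. E x} {x\<in>space M. A x = a'} q \<and>
         cond_prob_version M MV V {x\<in>space M. E x} {x\<in>space M. (Y0 x, Y1 x) \<in> B} r
         \<longrightarrow> (AE x in M. E x \<longrightarrow> p (V x) = q (V x) * r (V x))"
    and positivity:
      "\<forall>a'::bool. \<forall>p. cond_prob_version M (MV \<Otimes>\<^sub>M count_space UNIV) (\<lambda>x. (V x, W x))
           {x\<in>space M. E x} {x\<in>space M. A x = a'} p
         \<longrightarrow> (AE x in M. E x \<longrightarrow> p (V x, W x) > 0)"
    and mu1: "cond_exp_version M MV V {x\<in>space M. E x \<and> A x} (\<lambda>x. if A x then Y1 x else Y0 x) mu1"
    and mu0: "cond_exp_version M MV V {x\<in>space M. E x \<and> \<not> A x} (\<lambda>x. if A x then Y1 x else Y0 x) mu0"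
  shows "cond_exp_version M MV V {x\<in>space M. E x} (\<lambda>x. Y1 x - Y0 x) (\<lambda>v. mu1 v - mu0 v)"
proof -
  interpret prob_space M by (rule prob)
  let ?S = "{x\<in>space M. E x}"
  interpret VS: conditioning M MV V ?S by unfold_locales simp_all
  have AE_study: "AE x in M. x \<in> ?S \<longrightarrow> P x" if "AE x in M. E x \<longrightarrow> P x" for P
    using that by (auto elim!: eventually_mono)
  have potential_outcome: "cond_exp_version M MV V ?S (\<lambda>x. if a' then Y1 x else Y0 x) mu"
    if mu: "cond_exp_version M MV V {x\<in>space M. E x \<and> A x = a'} (\<lambda>x. if A x then Y1 x else Y0 x) mu" for a' mu
  proof -
    let ?C = "{x\<in>space M. A x = a'}"
    define h where "h z = (if a' then snd z else fst z)" for z :: "real \<times> real"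
    have [measurable]: "h \<in> borel_measurable borel" unfolding h_def by (cases a') (auto intro!: borel_measurable_continuous_onI continuous_intros)
    have "?S \<inter> ?C = {x\<in>space M. E x \<and> A x = a'}" by auto
    then have "cond_exp_version M MV V (?S \<inter> ?C) (\<lambda>x. h (Y0 x, Y1 x)) mu"
      using mu by (subst cond_exp_version_cong[where f'="\<lambda>x. if A x then Y1 x else Y0 x"]) (auto simp: h_def)
    moreover have "AE x in M. E x \<longrightarrow> a \<le> h (Y0 x, Y1 x) \<and> h (Y0 x, Y1 x) \<le> b"
      using bounded by eventually_elim (auto simp: h_def)
    ultimately have "cond_exp_version M MV V ?S (\<lambda>x. h (Y0 x, Y1 x)) mu"
      by (intro VS.cond_exp_version_ignorable[where NH="count_space UNIV" and NZ=borel and H=W,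
            OF _ _ _ AE_study AE_study _ AE_study])
        (use positivity unconfounded in auto)
    then show ?thesis by (cases a') (simp_all add: h_def)
  qed
  have Y1: "cond_exp_version M MV V ?S Y1 mu1"
    using potential_outcome[of True mu1] mu1 by simp
  have Y0: "cond_exp_version M MV V ?S Y0 mu0"
    using potential_outcome[of False mu0] mu0 by simp
  have integrable: "integrable M (\<lambda>x. indicator ?S x * Y x)"
    if "Y \<in> borel_measurable M" "AE x in M. a \<le> Y x \<and> Y x \<le> b" for Y
  proof (rule VS.integrable_indicator_bounded[OF that(1)])
    show "AE x in M. x \<in> ?S \<longrightarrow> \<bar>Y x\<bar> \<le> \<bar>a\<bar> + \<bar>b\<bar>"
      using that(2) by eventually_elim auto
  qed
  show ?thesis
    using VS.cond_exp_version_lincomb[OF Y1 Y0 integrable integrable, of 1 "- 1"] bounded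
    by (auto elim!: eventually_mono)
qed

theorem theorem1:
  fixes M :: "'a measure" and MV :: "'v measure"
    and V :: "'a \<Rightarrow> 'v" and W :: "'a \<Rightarrow> 'w"
    and E A :: "'a \<Rightarrow> bool" and Y0 Y1 :: "'a \<Rightarrow> real" and a b :: real
    and mu1 mu0 :: "'v \<Rightarrow> real" and nu :: "'v \<Rightarrow> 'w \<Rightarrow> real"
    and tau :: "'v \<times> 'w \<Rightarrow> real"
  assumes prob: "prob_space M"
    and V_meas: "V \<in> measurable M MV"
    and W_meas: "W \<in> measurable M (count_space UNIV)"
    and W_fin: "finite (W ` space M)"
    and E_meas: "E \<in> measurable M (count_space UNIV)"
    and A_meas: "A \<in> measurable M (count_space UNIV)"
    and Y0_meas: "Y0 \<in> borel_measurable M"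
    and Y1_meas: "Y1 \<in> borel_measurable M"
    and ab: "a < b"
    and bounded: "AE x in M. a \<le> Y0 x \<and> Y0 x \<le> b \<and> a \<le> Y1 x \<and> Y1 x \<le> b"
    and unconfounded:
      "\<forall>a'::bool. \<forall>B\<in>sets (borel :: (real \<times> real) measure). \<forall>p q r.
         cond_prob_version M MV V {x\<in>space M. E x}
             {x\<in>space M. A x = a' \<and> (Y0 x, Y1 x) \<in> B} p \<and>
         cond_prob_version M MV V {x\<in>space M. E x} {x\<in>space M. A x = a'} q \<and>
         cond_prob_version M MV V {x\<in>space M. E x} {x\<in>space M. (Y0 x, Y1 x) \<in> B} r
         \<longrightarrow> (AE x in M. E x \<longrightarrow> p (V x) = q (V x) * r (V x))"
    and positivity:
      "\<forall>a'::bool. \<forall>p. cond_prob_version M (MV \<Otimes>\<^sub>M count_space UNIV) (\<lambda>x. (V x, W x))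
           {x\<in>space M. E x} {x\<in>space M. A x = a'} p
         \<longrightarrow> (AE x in M. E x \<longrightarrow> p (V x, W x) > 0)"
    and nu_def:
      "\<forall>w. cond_prob_version M MV V {x\<in>space M. \<not> E x} {x\<in>space M. W x = w} (\<lambda>v. nu v w)"
    and transport1:
      "\<forall>w. cond_prob_version M MV V {x\<in>space M. E x} {x\<in>space M. W x = w} (\<lambda>v. nu v w)"
    and transport2:
      "\<exists>t. cond_exp_version M (MV \<Otimes>\<^sub>M count_space UNIV) (\<lambda>x. (V x, W x))
              {x\<in>space M. E x} (\<lambda>x. Y1 x - Y0 x) t \<and>
           cond_exp_version M (MV \<Otimes>\<^sub>M count_space UNIV) (\<lambda>x. (V x, W x))
              {x\<in>space M. \<not> E x} (\<lambda>x. Y1 x - Y0 x) t"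
    and mu1_def:
      "cond_exp_version M MV V {x\<in>space M. E x \<and> A x}
         (\<lambda>x. if A x then Y1 x else Y0 x) mu1"
    and mu0_def:
      "cond_exp_version M MV V {x\<in>space M. E x \<and> \<not> A x}
         (\<lambda>x. if A x then Y1 x else Y0 x) mu0"
    and tau_def:
      "cond_exp_version M (MV \<Otimes>\<^sub>M count_space UNIV) (\<lambda>x. (V x, W x))
         {x\<in>space M. E x} (\<lambda>x. Y1 x - Y0 x) tau"
  shows "AE x in M. E x \<longrightarrow> (\<forall>w\<in>W ` space M. nu (V x) w > 0 \<longrightarrow>
           gamma_l a b (mu1 (V x)) (mu0 (V x)) (nu (V x) w) \<le> tau (V x, w) \<and>
           tau (V x, w) \<le> gamma_u a b (mu1 (V x)) (mu0 (V x)) (nu (V x) w))"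
proof -
  interpret prob_space M by (rule prob)
  let ?S = "{x\<in>space M. E x}"
  interpret VW: finite_refinement M MV V ?S W nu
    using V_meas W_meas W_fin E_meas transport1 by unfold_locales auto
  have effect: "cond_exp_version M MV V ?S (\<lambda>x. Y1 x - Y0 x) (\<lambda>v. mu1 v - mu0 v)"
    by (rule conditional_treatment_effect_version[OF prob V_meas W_meas E_meas A_meas Y0_meas Y1_meas bounded
          unconfounded positivity mu1_def mu0_def])
  have effect_bounds: "AE x in M. x \<in> ?S \<longrightarrow> a - b \<le> Y1 x - Y0 x \<and> Y1 x - Y0 x \<le> b - a"
    using bounded by eventually_elim auto
  have mixture: "AE x in M. x \<in> ?S \<longrightarrow>
      mu1 (V x) - mu0 (V x) = (\<Sum>w\<in>W ` space M. nu (V x) w * tau (V x, w))"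
    by (rule VW.cond_exp_version_total[OF effect tau_def _ effect_bounds]) (use Y0_meas Y1_meas in measurable)
  have tau_bounds: "AE x in M. x \<in> ?S \<longrightarrow>
      (\<forall>w\<in>W ` space M. 0 < nu (V x) w \<longrightarrow> a - b \<le> tau (V x, w) \<and> tau (V x, w) \<le> b - a)"
    by (rule VW.cond_exp_version_bounds_where_pos[OF tau_def _ effect_bounds]) (use Y0_meas Y1_meas in measurable)
  show ?thesis
    using mixture tau_bounds VW.cond_prob_version_simplex AE_space
    by eventually_elim (intro impI gamma_bounds[OF W_fin], auto)
qed

end
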